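(* Let $G$ be a finite abelian group, $n$ a positive integer, and $\mathcal M=(I_n(\hat G),\le)$. Then $\mathrm{Rep}(\mathcal M,\hat G)$ is the full subcategory of $\mathrm{Rep}(I_n(\hat G),\hat G)$ whose objects are direct sums of the simple object $\hat G^{\oplus n}$.
   Context: $\hat G=G\sqcup\{0\}$ with $0$ absorbing. $\mathrm{Vect}_{\hat G}$: objects are finite pointed sets with an action of $\hat G$ ($0v=0$, $g0=0$) such that $G$ acts freely on nonzero elements; morphisms $f$ satisfy $f(0)=0$, $f(gv)=gf(v)$, $f(v_1)=f(v_2)\neq0\Rightarrow Gv_1=Gv_2$; $\oplus$ is disjoint union with zeros identified. $I_n(\hat G)$ is the monoid of $n\times n$ matrices over $\hat G$ with at most one nonzero entry in each row and column, under matrix multiplication, with $G$ as scalar matrices. $\hat G^{\oplus n}=\{0\}\cup\{g\mathbf e_i: g\in G, 1\le i\le n\}$ with $I_n(\hat G)$ acting by matrix multiplication. $\mathrm{Rep}(I_n(\hat G),\hat G)$: objects $V$ of $\mathrm{Vect}_{\hat G}$ with an action $a\mapsto V(a)$ of $I_n(\hat G)$ by morphisms of $\mathrm{Vect}_{\hat G}$, zero matrix acting as zero and $g\in G$ as the scalar $g$; morphisms are equivariant morphisms. On $I_n(\hat G)$, and more generally on $\mathrm{End}_{\hat G}(V)$, the partial order is $A\le B$ iff for all $x$, $Ax\neq0$ implies $Bx=Ax$. $\mathrm{Rep}(\mathcal M,\hat G)$ is the full subcategory of $\mathrm{Rep}(I_n(\hat G),\hat G)$ of those $V$ such that whenever $\bigvee_{a\in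 I}a$ exists in $I_n(\hat G)$ for a subset $I$, the join $\bigvee_{a\in I}V(a)$ exists in $\mathrm{End}_{\hat G}(V)$ and equals $V(\bigvee_{a\in I}a)$. *)

theory Defs
  imports "HOL-Algebra.Group"
begin

text \<open>Elements of \<open>G\<hat>\<close> = G plus an absorbing 0 are encoded as \<open>'g option\<close>,
  with None playing the role of 0.  An n x n matrix over \<open>G\<hat>\<close> is a function
  \<open>nat \<Rightarrow> nat \<Rightarrow> 'g option\<close>, all entries outside the index range being None.\<close>

type_synonym 'g mat = "nat \<Rightarrow> nat \<Rightarrow> 'g option"

text \<open>A pointed finite G-set together with an action of matrices.
  For plain objects of Vect_Ghat the field mact is ignored.\<close>
record ('g, 'v) gobj =
  carr :: "'v set"
  zer  :: 'v
  gact :: "'g \<Rightarrow> 'v \<Rightarrow> 'v"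
  mact :: "'g mat \<Rightarrow> 'v \<Rightarrow> 'v"

definition vect_obj :: "('g, 'b) monoid_scheme \<Rightarrow> ('g, 'v, 'z) gobj_scheme \<Rightarrow> bool" where
  "vect_obj G V \<longleftrightarrow>
     finite (carr V) \<and> zer V \<in> carr V \<and>
     (\<forall>g\<in>carrier G. \<forall>v\<in>carr V. gact V g v \<in> carr V) \<and>
     (\<forall>g\<in>carrier G. gact V g (zer V) = zer V) \<and>
     (\<forall>v\<in>carr V. gact V \<one>\<^bsub>G\<^esub> v = v) \<and>
     (\<forall>g\<in>carrier G. \<forall>h\<in>carrier G. \<forall>v\<in>carr V.
         gact V (g \<otimes>\<^bsub>G\<^esub> h) v = gact V g (gact V h v)) \<and>
     (\<forall>g\<in>carrier G. \<forall>v\<in>carr V. v \<noteq> zer V \<longrightarrow> gact V g v = v \<longrightarrow> g = \<one>\<^bsub>G\<^esub>)"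

definition orbit :: "('g, 'b) monoid_scheme \<Rightarrow> ('g, 'v, 'z) gobj_scheme \<Rightarrow> 'v \<Rightarrow> 'v set" where
  "orbit G V v = (\<lambda>g. gact V g v) ` carrier G"

definition vect_mor :: "('g, 'b) monoid_scheme \<Rightarrow> ('g, 'v, 'z) gobj_scheme \<Rightarrow> ('g, 'w, 'y) gobj_scheme
                        \<Rightarrow> ('v \<Rightarrow> 'w) \<Rightarrow> bool" where
  "vect_mor G V W f \<longleftrightarrow>
     (\<forall>v\<in>carr V. f v \<in> carr W) \<and> f (zer V) = zer W \<and>
     (\<forall>g\<in>carrier G. \<forall>v\<in>carr V. f (gact V g v) = gact W g (f v)) \<and>
     (\<forall>v1\<in>carr V. \<forall>v2\<in>carr V. f v1 = f v2 \<longrightarrow> f v1 \<noteq> zer W \<longrightarrow> orbit G V v1 = orbit G V v2)"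

definition In_mat :: "('g, 'b) monoid_scheme \<Rightarrow> nat \<Rightarrow> 'g mat \<Rightarrow> bool" where
  "In_mat G n A \<longleftrightarrow>
     (\<forall>i j. A i j \<noteq> None \<longrightarrow> i < n \<and> j < n \<and> the (A i j) \<in> carrier G) \<and>
     (\<forall>i j j'. A i j \<noteq> None \<longrightarrow> A i j' \<noteq> None \<longrightarrow> j = j') \<and>
     (\<forall>i i' j. A i j \<noteq> None \<longrightarrow> A i' j \<noteq> None \<longrightarrow> i = i')"

text \<open>Matrix product: the sum over k has at most one nonzero term.\<close>
definition mmul :: "('g, 'b) monoid_scheme \<Rightarrow> nat \<Rightarrow> 'g mat \<Rightarrow> 'g mat \<Rightarrow> 'g mat" where
  "mmul G n A B = (\<lambda>i j.
     if \<exists>k<n. A i k \<noteq> None \<and> B k j \<noteq> None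
     then (let k = (SOME k. k < n \<and> A i k \<noteq> None \<and> B k j \<noteq> None)
           in Some (the (A i k) \<otimes>\<^bsub>G\<^esub> the (B k j)))
     else None)"

definition zero_mat :: "'g mat" where
  "zero_mat = (\<lambda>i j. None)"

definition scal_mat :: "nat \<Rightarrow> 'g \<Rightarrow> 'g mat" where
  "scal_mat n g = (\<lambda>i j. if i = j \<and> i < n then Some g else None)"

text \<open>The object \<open>G\<hat>^{\<oplus>n}\<close>: None is 0 and Some (g, i) is g e_i.\<close>
definition Ghat_n :: "('g, 'b) monoid_scheme \<Rightarrow> nat \<Rightarrow> ('g, ('g \<times> nat) option) gobj" where
  "Ghat_n G n =
     \<lparr> carr = insert None {Some (g, i) | g i. g \<in> carrier G \<and> i < n},
       zer = None,
       gact = (\<lambda>h x. case x of None \<Rightarrow> None | Some (g, i) \<Rightarrow> Some (h \<otimes>\<^bsub>G\<^esub> g, i)),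
       mact = (\<lambda>A x. case x of None \<Rightarrow> None
                 | Some (g, i) \<Rightarrow>
                     (if \<exists>j. A j i \<noteq> None
                      then (let j = (THE j. A j i \<noteq> None) in Some (the (A j i) \<otimes>\<^bsub>G\<^esub> g, j))
                      else None)) \<rparr>"

definition rep_obj :: "('g, 'b) monoid_scheme \<Rightarrow> nat \<Rightarrow> ('g, 'v, 'z) gobj_scheme \<Rightarrow> bool" where
  "rep_obj G n V \<longleftrightarrow>
     vect_obj G V \<and>
     (\<forall>A. In_mat G n A \<longrightarrow> vect_mor G V V (mact V A)) \<and>
     (\<forall>A B. In_mat G n A \<longrightarrow> In_mat G n B \<longrightarrow>
        (\<forall>v\<in>carr V. mact V (mmul G n A B) v = mact V A (mact V B v))) \<and>
     (\<forall>v\<in>carr V. mact V zero_mat v = zer V) \<and>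
     (\<forall>g\<in>carrier G. \<forall>v\<in>carr V. mact V (scal_mat n g) v = gact V g v)"

definition rep_mor :: "('g, 'b) monoid_scheme \<Rightarrow> nat \<Rightarrow> ('g, 'v, 'z) gobj_scheme \<Rightarrow> ('g, 'w, 'y) gobj_scheme
                        \<Rightarrow> ('v \<Rightarrow> 'w) \<Rightarrow> bool" where
  "rep_mor G n V W f \<longleftrightarrow> vect_mor G V W f \<and>
     (\<forall>A. In_mat G n A \<longrightarrow> (\<forall>v\<in>carr V. f (mact V A v) = mact W A (f v)))"

definition rep_iso :: "('g, 'b) monoid_scheme \<Rightarrow> nat \<Rightarrow> ('g, 'v, 'z) gobj_scheme \<Rightarrow> ('g, 'w, 'y) gobj_scheme
                        \<Rightarrow> bool" where
  "rep_iso G n V W \<longleftrightarrow> (\<exists>f h. rep_mor G n V W f \<and> rep_mor G n W V h \<and>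
     (\<forall>v\<in>carr V. h (f v) = v) \<and> (\<forall>w\<in>carr W. f (h w) = w))"

text \<open>Direct sum of a family of objects: disjoint union with the zeros identified.\<close>
definition dsum :: "'c set \<Rightarrow> ('c \<Rightarrow> ('g, 'v, 'z) gobj_scheme) \<Rightarrow> ('g, ('c \<times> 'v) option) gobj" where
  "dsum C F =
     \<lparr> carr = insert None {Some (c, v) | c v. c \<in> C \<and> v \<in> carr (F c) \<and> v \<noteq> zer (F c)},
       zer = None,
       gact = (\<lambda>g x. case x of None \<Rightarrow> None
                | Some (c, v) \<Rightarrow> (if gact (F c) g v = zer (F c) then None
                                   else Some (c, gact (F c) g v))),
       mact = (\<lambda>A x. case x of None \<Rightarrow> None
                | Some (c, v) \<Rightarrow> (if mact (F c) A v = zer (F c) then None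
                                   else Some (c, mact (F c) A v))) \<rparr>"

definition le_End :: "('g, 'v, 'z) gobj_scheme \<Rightarrow> ('v \<Rightarrow> 'v) \<Rightarrow> ('v \<Rightarrow> 'v) \<Rightarrow> bool" where
  "le_End V A B \<longleftrightarrow> (\<forall>x\<in>carr V. A x \<noteq> zer V \<longrightarrow> B x = A x)"

definition is_join_End :: "('g, 'b) monoid_scheme \<Rightarrow> ('g, 'v, 'z) gobj_scheme \<Rightarrow> ('v \<Rightarrow> 'v) set
                            \<Rightarrow> ('v \<Rightarrow> 'v) \<Rightarrow> bool" where
  "is_join_End G V S J \<longleftrightarrow> vect_mor G V V J \<and> (\<forall>A\<in>S. le_End V A J) \<and>
     (\<forall>B. vect_mor G V V B \<longrightarrow> (\<forall>A\<in>S. le_End V A B) \<longrightarrow> le_End V J B)"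

definition le_In :: "('g, 'b) monoid_scheme \<Rightarrow> nat \<Rightarrow> 'g mat \<Rightarrow> 'g mat \<Rightarrow> bool" where
  "le_In G n A B = le_End (Ghat_n G n) (mact (Ghat_n G n) A) (mact (Ghat_n G n) B)"

definition is_join_In :: "('g, 'b) monoid_scheme \<Rightarrow> nat \<Rightarrow> 'g mat set \<Rightarrow> 'g mat \<Rightarrow> bool" where
  "is_join_In G n S J \<longleftrightarrow> In_mat G n J \<and> (\<forall>A\<in>S. le_In G n A J) \<and>
     (\<forall>B. In_mat G n B \<longrightarrow> (\<forall>A\<in>S. le_In G n A B) \<longrightarrow> le_In G n J B)"

definition rep_M :: "('g, 'b) monoid_scheme \<Rightarrow> nat \<Rightarrow> ('g, 'v, 'z) gobj_scheme \<Rightarrow> bool" where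
  "rep_M G n V \<longleftrightarrow> rep_obj G n V \<and>
     (\<forall>S J. S \<subseteq> {A. In_mat G n A} \<longrightarrow> is_join_In G n S J \<longrightarrow>
        is_join_End G V (mact V ` S) (mact V J))"

end

theory Submission
  imports Defs
begin

text \<open>
  Write E_ij for the matrix units. The diagonal units E_ii have the identity as their join in
  I_n(G^), and a representation V belongs to Rep(M, G^) exactly when every nonzero vector is fixed
  by some E_ii. Necessity: the map that fixes the vectors not killed by every E_ii and kills the
  rest is an upper bound of the V(E_ii), so it dominates V(1), the identity. Sufficiency: on a
  vector fixed by E_ll a matrix acts through its l-th column alone, and the l-th column of a join
  in I_n(G^) is that of any member of the family whose l-th column is nonzero.

  For such V the nonzero vectors fixed by E_00 form a free G-set. If r_1, ..., r_k represent its
  orbits, then (c, g e_i) |-> g E_i0 r_c is an isomorphism onto V from the sum of k copies of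
  G^^n; conversely every such sum has the property above.
\<close>

section \<open>Monomial matrices\<close>

definition mat_unit :: "('g, 'b) monoid_scheme \<Rightarrow> nat \<Rightarrow> nat \<Rightarrow> 'g mat" where
  "mat_unit G i j = (\<lambda>p q. if p = i \<and> q = j then Some \<one>\<^bsub>G\<^esub> else None)"

lemma In_mat_entry: "In_mat G n A \<Longrightarrow> A j i \<noteq> None \<Longrightarrow> j < n \<and> i < n \<and> the (A j i) \<in> carrier G"
  unfolding In_mat_def by blast

lemma In_mat_row_unique: "In_mat G n A \<Longrightarrow> A j i \<noteq> None \<Longrightarrow> A j i' \<noteq> None \<Longrightarrow> i' = i"
  unfolding In_mat_def by blast

lemma In_mat_col_unique: "In_mat G n A \<Longrightarrow> A j i \<noteq> None \<Longrightarrow> A j' i \<noteq> None \<Longrightarrow> j' = j"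
  unfolding In_mat_def by blast

lemma In_mat_zero_mat: "In_mat G n zero_mat"
  unfolding In_mat_def zero_mat_def by simp

lemma mmul_Some:
  assumes "In_mat G n A" "k < n" "A i k \<noteq> None" "B k j \<noteq> None"
  shows "mmul G n A B i j = Some (the (A i k) \<otimes>\<^bsub>G\<^esub> the (B k j))"
proof -
  have ex: "\<exists>k. k < n \<and> A i k \<noteq> None \<and> B k j \<noteq> None" using assms by blast
  have "(SOME k. k < n \<and> A i k \<noteq> None \<and> B k j \<noteq> None) = k"
    using someI_ex[OF ex] In_mat_row_unique[OF assms(1)] assms(3) by blast
  then show ?thesis unfolding mmul_def using ex by (simp add: Let_def)
qed

lemma mmul_None: "\<forall>k<n. A i k = None \<or> B k j = None \<Longrightarrow> mmul G n A B i j = None"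
  unfolding mmul_def by auto

lemma mmul_not_None: "mmul G n A B i j \<noteq> None \<Longrightarrow> \<exists>k<n. A i k \<noteq> None \<and> B k j \<noteq> None"
  unfolding mmul_def by (auto split: if_splits)

context monoid
begin

lemma In_mat_mat_unit: "i < n \<Longrightarrow> j < n \<Longrightarrow> In_mat G n (mat_unit G i j)"
  unfolding In_mat_def mat_unit_def by simp

lemma In_mat_scal_mat: "a \<in> carrier G \<Longrightarrow> In_mat G n (scal_mat n a)"
  unfolding In_mat_def scal_mat_def by auto

lemma In_mat_mmul:
  assumes A: "In_mat G n A" and B: "In_mat G n B"
  shows "In_mat G n (mmul G n A B)"
  unfolding In_mat_def
proof (intro conjI allI impI)
  fix i j assume "mmul G n A B i j \<noteq> None"
  from mmul_not_None[OF this] obtain k where k: "k < n" "A i k \<noteq> None" "B k j \<noteq> None" by blast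
  then show "i < n" "j < n" "the (mmul G n A B i j) \<in> carrier G"
    using mmul_Some[of G n A k i B j, OF A k] In_mat_entry[OF A k(2)] In_mat_entry[OF B k(3)] by simp_all
next
  fix i j j' assume "mmul G n A B i j \<noteq> None" "mmul G n A B i j' \<noteq> None"
  from this[THEN mmul_not_None] obtain k k'
    where a: "A i k \<noteq> None" and b: "B k j \<noteq> None" and a': "A i k' \<noteq> None" and b': "B k' j' \<noteq> None"
    by blast
  have "k' = k" using In_mat_row_unique[OF A a a'] .
  with b' have "B k j' \<noteq> None" by simp
  then show "j = j'" using In_mat_row_unique[OF B b] by simp
next
  fix i i' j assume "mmul G n A B i j \<noteq> None" "mmul G n A B i' j \<noteq> None"
  from this[THEN mmul_not_None] obtain k k'
    where a: "A i k \<noteq> None" and b: "B k j \<noteq> None" and a': "A i' k' \<noteq> None" and b': "B k' j \<noteq> None"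
    by blast
  have "k' = k" using In_mat_col_unique[OF B b b'] .
  with a' have "A i' k \<noteq> None" by simp
  then show "i = i'" using In_mat_col_unique[OF A a] by simp
qed

lemma mmul_mat_unit_right:
  assumes X: "In_mat G n X" and l: "l < n"
  shows "mmul G n X (mat_unit G l m) = (\<lambda>p q. if q = m then X p l else None)"
proof (intro ext)
  fix p q
  show "mmul G n X (mat_unit G l m) p q = (if q = m then X p l else None)"
  proof (cases "q = m \<and> X p l \<noteq> None")
    case True
    then show ?thesis
      using mmul_Some[OF X l, of p "mat_unit G l m" q] In_mat_entry[OF X] by (auto simp: mat_unit_def)
  next
    case False
    then show ?thesis by (subst mmul_None) (auto simp: mat_unit_def)
  qed
qed

lemma mmul_mat_unit_mat_unit:
  "i < n \<Longrightarrow> l < n \<Longrightarrow> l' < n \<Longrightarrow>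
    mmul G n (mat_unit G i l) (mat_unit G l' m) = (if l = l' then mat_unit G i m else zero_mat)"
  using mmul_mat_unit_right[OF In_mat_mat_unit, of i n l l' m]
  by (auto simp: mat_unit_def zero_mat_def fun_eq_iff)

lemma mmul_mat_unit_col_entry:
  assumes A: "In_mat G n A" and Aji: "A j i \<noteq> None" and i: "i < n"
  shows "mmul G n A (mat_unit G i m) = mmul G n (scal_mat n (the (A j i))) (mat_unit G j m)"
proof -
  obtain a where a: "A j i = Some a" using Aji by blast
  have j: "j < n" and a_in: "a \<in> carrier G" using In_mat_entry[OF A Aji] a by auto
  have col: "A p i = (if p = j then Some a else None)" for p
  proof (cases "p = j")
    case False
    then have "A p i = None" using In_mat_col_unique[OF A Aji, of p] by blast
    with False show ?thesis by simp
  qed (use a in simp)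
  show ?thesis
    unfolding mmul_mat_unit_right[OF A i] a option.sel mmul_mat_unit_right[OF In_mat_scal_mat[OF a_in] j]
    using j by (simp add: fun_eq_iff scal_mat_def col)
qed

lemma mmul_mat_unit_col_empty:
  "In_mat G n A \<Longrightarrow> i < n \<Longrightarrow> \<forall>j. A j i = None \<Longrightarrow> mmul G n A (mat_unit G i m) = zero_mat"
  by (simp add: mmul_mat_unit_right fun_eq_iff zero_mat_def)

end

section \<open>G-sets and representations\<close>

context group
begin

lemma surj_const_mult_right:
  assumes a: "a \<in> carrier G"
  shows "(\<lambda>x. x \<otimes> a) ` carrier G = carrier G"
proof
  show "carrier G \<subseteq> (\<lambda>x. x \<otimes> a) ` carrier G"
  proof
    fix x assume x: "x \<in> carrier G"
    then have "x = (x \<otimes> inv a) \<otimes> a" using a by (simp add: m_assoc)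
    then show "x \<in> (\<lambda>x. x \<otimes> a) ` carrier G" using a x by blast
  qed
qed (use a in auto)

lemma vect_obj_zer_in: "vect_obj G V \<Longrightarrow> zer V \<in> carr V"
  unfolding vect_obj_def by blast

lemma vect_obj_gact_closed: "vect_obj G V \<Longrightarrow> g \<in> carrier G \<Longrightarrow> v \<in> carr V \<Longrightarrow> gact V g v \<in> carr V"
  unfolding vect_obj_def by blast

lemma vect_obj_gact_zer: "vect_obj G V \<Longrightarrow> g \<in> carrier G \<Longrightarrow> gact V g (zer V) = zer V"
  unfolding vect_obj_def by blast

lemma vect_obj_gact_one: "vect_obj G V \<Longrightarrow> v \<in> carr V \<Longrightarrow> gact V \<one> v = v"
  unfolding vect_obj_def by blast

lemma vect_obj_gact_mult:
  "vect_obj G V \<Longrightarrow> g \<in> carrier G \<Longrightarrow> h \<in> carrier G \<Longrightarrow> v \<in> carr V \<Longrightarrow>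
    gact V (g \<otimes> h) v = gact V g (gact V h v)"
  unfolding vect_obj_def by blast

lemma vect_obj_gact_free:
  "vect_obj G V \<Longrightarrow> g \<in> carrier G \<Longrightarrow> v \<in> carr V \<Longrightarrow> v \<noteq> zer V \<Longrightarrow> gact V g v = v \<Longrightarrow> g = \<one>"
  unfolding vect_obj_def by blast

lemma vect_obj_gact_inv:
  "vect_obj G V \<Longrightarrow> g \<in> carrier G \<Longrightarrow> v \<in> carr V \<Longrightarrow> gact V (inv g) (gact V g v) = v"
  using vect_obj_gact_mult[of V "inv g" g v] vect_obj_gact_one[of V v] by simp

lemma vect_obj_gact_nonzero:
  "vect_obj G V \<Longrightarrow> g \<in> carrier G \<Longrightarrow> v \<in> carr V \<Longrightarrow> v \<noteq> zer V \<Longrightarrow> gact V g v \<noteq> zer V"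
  using vect_obj_gact_inv[of V g v] vect_obj_gact_zer[of V "inv g"] by auto

lemma vect_obj_gact_cancel:
  assumes V: "vect_obj G V" and g: "g \<in> carrier G" and h: "h \<in> carrier G"
    and v: "v \<in> carr V" "v \<noteq> zer V" and eq: "gact V g v = gact V h v"
  shows "g = h"
proof -
  have "gact V (inv h \<otimes> g) v = v"
    using eq vect_obj_gact_mult[OF V inv_closed[OF h] g v(1)] vect_obj_gact_inv[OF V h v(1)] by simp
  then have "inv h \<otimes> g = \<one>" using vect_obj_gact_free[OF V _ v] g h by simp
  then show ?thesis using g h by (metis inv_closed inv_equality inv_inv)
qed

lemma orbit_self: "vect_obj G V \<Longrightarrow> v \<in> carr V \<Longrightarrow> v \<in> orbit G V v"
  unfolding orbit_def using vect_obj_gact_one[of V v] by force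

lemma orbit_gact:
  assumes V: "vect_obj G V" and v: "v \<in> carr V" and g: "g \<in> carrier G"
  shows "orbit G V (gact V g v) = orbit G V v"
proof -
  have "(\<lambda>h. gact V h (gact V g v)) ` carrier G = (\<lambda>h. gact V (h \<otimes> g) v) ` carrier G"
    using vect_obj_gact_mult[OF V _ g v] by simp
  also have "\<dots> = (\<lambda>h. gact V h v) ` ((\<lambda>h. h \<otimes> g) ` carrier G)" by (simp add: image_image)
  also have "(\<lambda>h. h \<otimes> g) ` carrier G = carrier G" using g by (rule surj_const_mult_right)
  finally show ?thesis unfolding orbit_def .
qed

lemma rep_obj_vect_obj: "rep_obj G n V \<Longrightarrow> vect_obj G V"
  unfolding rep_obj_def by blast

lemma rep_obj_mact_vect_mor: "rep_obj G n V \<Longrightarrow> In_mat G n A \<Longrightarrow> vect_mor G V V (mact V A)"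
  unfolding rep_obj_def by blast

lemma rep_obj_mact_closed: "rep_obj G n V \<Longrightarrow> In_mat G n A \<Longrightarrow> v \<in> carr V \<Longrightarrow> mact V A v \<in> carr V"
  using rep_obj_mact_vect_mor unfolding vect_mor_def by blast

lemma rep_obj_mact_zer: "rep_obj G n V \<Longrightarrow> In_mat G n A \<Longrightarrow> mact V A (zer V) = zer V"
  using rep_obj_mact_vect_mor unfolding vect_mor_def by blast

lemma rep_obj_mact_gact:
  "rep_obj G n V \<Longrightarrow> In_mat G n A \<Longrightarrow> g \<in> carrier G \<Longrightarrow> v \<in> carr V \<Longrightarrow>
    mact V A (gact V g v) = gact V g (mact V A v)"
  using rep_obj_mact_vect_mor unfolding vect_mor_def by blast

lemma rep_obj_mact_mmul:
  "rep_obj G n V \<Longrightarrow> In_mat G n A \<Longrightarrow> In_mat G n B \<Longrightarrow> v \<in> carr V \<Longrightarrow>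
    mact V (mmul G n A B) v = mact V A (mact V B v)"
  unfolding rep_obj_def by blast

lemma rep_obj_mact_zero_mat: "rep_obj G n V \<Longrightarrow> v \<in> carr V \<Longrightarrow> mact V zero_mat v = zer V"
  unfolding rep_obj_def by blast

lemma rep_obj_mact_scal_mat:
  "rep_obj G n V \<Longrightarrow> g \<in> carrier G \<Longrightarrow> v \<in> carr V \<Longrightarrow> mact V (scal_mat n g) v = gact V g v"
  unfolding rep_obj_def by blast

lemma rep_obj_mact_one: "rep_obj G n V \<Longrightarrow> v \<in> carr V \<Longrightarrow> mact V (scal_mat n \<one>) v = v"
  using rep_obj_mact_scal_mat rep_obj_vect_obj vect_obj_gact_one by fastforce

lemma rep_obj_mact_mat_unit_mat_unit:
  assumes V: "rep_obj G n V" and i: "i < n" and l: "l < n" and l': "l' < n" and m: "m < n"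
    and v: "v \<in> carr V"
  shows "mact V (mat_unit G i l) (mact V (mat_unit G l' m) v) =
    (if l = l' then mact V (mat_unit G i m) v else zer V)"
  using rep_obj_mact_mmul[OF V In_mat_mat_unit[OF i l] In_mat_mat_unit[OF l' m] v, symmetric]
    mmul_mat_unit_mat_unit[OF i l l', of m] rep_obj_mact_zero_mat[OF V v] by simp

end

section \<open>The simple object\<close>

lemma carr_Ghat_n: "carr (Ghat_n G n) = insert None {Some (g, i) | g i. g \<in> carrier G \<and> i < n}"
  unfolding Ghat_n_def by simp

lemma zer_Ghat_n [simp]: "zer (Ghat_n G n) = None"
  unfolding Ghat_n_def by simp

lemma gact_Ghat_n [simp]:
  "gact (Ghat_n G n) h None = None"
  "gact (Ghat_n G n) h (Some (g, i)) = Some (h \<otimes>\<^bsub>G\<^esub> g, i)"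
  unfolding Ghat_n_def by simp_all

lemma carr_Ghat_n_cases:
  assumes "x \<in> carr (Ghat_n G n)"
  obtains "x = None" | g i where "x = Some (g, i)" "g \<in> carrier G" "i < n"
  using assms unfolding carr_Ghat_n by blast

lemma mact_Ghat_n_None [simp]: "mact (Ghat_n G n) A None = None"
  unfolding Ghat_n_def by simp

lemma mact_Ghat_n_col_entry:
  assumes "In_mat G n A" "A j i \<noteq> None"
  shows "mact (Ghat_n G n) A (Some (g, i)) = Some (the (A j i) \<otimes>\<^bsub>G\<^esub> g, j)"
proof -
  have "(THE j. A j i \<noteq> None) = j" using assms In_mat_col_unique by blast
  then show ?thesis unfolding Ghat_n_def using assms(2) by (auto simp: Let_def)
qed

lemma mact_Ghat_n_col_empty: "\<forall>j. A j i = None \<Longrightarrow> mact (Ghat_n G n) A (Some (g, i)) = None"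
  unfolding Ghat_n_def by simp

lemma mact_Ghat_n_col_cong:
  "\<forall>p. A p i = B p i \<Longrightarrow> mact (Ghat_n G n) A (Some (g, i)) = mact (Ghat_n G n) B (Some (g, i))"
  unfolding Ghat_n_def by simp

lemma mact_Ghat_n_cases:
  assumes "In_mat G n A"
  obtains j where "A j i \<noteq> None" "j < n" "the (A j i) \<in> carrier G"
      "mact (Ghat_n G n) A (Some (g, i)) = Some (the (A j i) \<otimes>\<^bsub>G\<^esub> g, j)"
    | "\<And>j. A j i = None" "mact (Ghat_n G n) A (Some (g, i)) = None"
  using assms In_mat_entry mact_Ghat_n_col_entry mact_Ghat_n_col_empty by metis

context group
begin

lemma orbit_Ghat_n:
  assumes "g \<in> carrier G"
  shows "orbit G (Ghat_n G n) (Some (g, i)) = {Some (x, i) | x. x \<in> carrier G}"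
proof -
  have "(\<lambda>h. h \<otimes> g) ` carrier G = carrier G" using assms by (rule surj_const_mult_right)
  then show ?thesis unfolding orbit_def by (auto simp: image_iff)
qed

lemma vect_obj_Ghat_n:
  assumes "finite (carrier G)"
  shows "vect_obj G (Ghat_n G n)"
proof -
  have "carr (Ghat_n G n) = insert None ((\<lambda>(g, i). Some (g, i)) ` (carrier G \<times> {..<n}))"
    unfolding carr_Ghat_n by auto
  then have "finite (carr (Ghat_n G n))" using assms by simp
  then show ?thesis unfolding vect_obj_def carr_Ghat_n by (auto simp: m_assoc)
qed

lemma mact_Ghat_n_mmul:
  assumes A: "In_mat G n A" and B: "In_mat G n B" and g: "g \<in> carrier G"
  shows "mact (Ghat_n G n) (mmul G n A B) (Some (g, i)) =
    mact (Ghat_n G n) A (mact (Ghat_n G n) B (Some (g, i)))"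
proof (cases rule: mact_Ghat_n_cases[OF B, of i g])
  case (1 l)
  note B_col = this
  show ?thesis
  proof (cases rule: mact_Ghat_n_cases[OF A, of l "the (B l i) \<otimes> g"])
    case (1 j)
    have "mmul G n A B j i = Some (the (A j l) \<otimes> the (B l i))"
      using mmul_Some[of G n A l j B i, OF A \<open>l < n\<close> \<open>A j l \<noteq> None\<close> \<open>B l i \<noteq> None\<close>] .
    then show ?thesis
      using mact_Ghat_n_col_entry[OF In_mat_mmul[OF A B], of j i g] B_col 1 g by (simp add: m_assoc)
  next
    case 2
    have "mmul G n A B p i = None" for p
      using In_mat_col_unique[OF B \<open>B l i \<noteq> None\<close>] 2(1) by (intro mmul_None) blast
    then show ?thesis using B_col 2 by (simp add: mact_Ghat_n_col_empty)
  qed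
next
  case 2
  then have "mmul G n A B p i = None" for p by (simp add: mmul_None)
  then show ?thesis using 2 by (simp add: mact_Ghat_n_col_empty)
qed

end

context comm_group
begin

lemma vect_mor_mact_Ghat_n:
  assumes A: "In_mat G n A"
  shows "vect_mor G (Ghat_n G n) (Ghat_n G n) (mact (Ghat_n G n) A)"
  unfolding vect_mor_def
proof (intro conjI ballI impI)
  fix x assume "x \<in> carr (Ghat_n G n)"
  then show "mact (Ghat_n G n) A x \<in> carr (Ghat_n G n)"
  proof (cases rule: carr_Ghat_n_cases)
    case (2 g i)
    then show ?thesis by (cases rule: mact_Ghat_n_cases[OF A, of i g]) (auto simp: carr_Ghat_n)
  qed (simp add: carr_Ghat_n)
next
  fix h x assume h: "h \<in> carrier G" and x: "x \<in> carr (Ghat_n G n)"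
  from x show "mact (Ghat_n G n) A (gact (Ghat_n G n) h x) = gact (Ghat_n G n) h (mact (Ghat_n G n) A x)"
  proof (cases rule: carr_Ghat_n_cases)
    case (2 g i)
    then show ?thesis
    proof (cases rule: mact_Ghat_n_cases[OF A, of i g])
      case (1 j)
      then show ?thesis using 2 h mact_Ghat_n_col_entry[OF A \<open>A j i \<noteq> None\<close>] by (simp add: m_lcomm)
    next
      case 2
      then show ?thesis using \<open>x = Some (g, i)\<close> by (simp add: mact_Ghat_n_col_empty)
    qed
  qed simp
next
  fix x1 x2 assume x1: "x1 \<in> carr (Ghat_n G n)" and x2: "x2 \<in> carr (Ghat_n G n)"
    and eq: "mact (Ghat_n G n) A x1 = mact (Ghat_n G n) A x2"
    and nz: "mact (Ghat_n G n) A x1 \<noteq> zer (Ghat_n G n)"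
  obtain g1 i1 g2 i2 where x: "x1 = Some (g1, i1)" "x2 = Some (g2, i2)" "g1 \<in> carrier G" "g2 \<in> carrier G"
    using x1 x2 eq nz unfolding carr_Ghat_n by auto
  obtain j1 where j1: "A j1 i1 \<noteq> None" "mact (Ghat_n G n) A x1 = Some (the (A j1 i1) \<otimes> g1, j1)"
    using nz x by (cases rule: mact_Ghat_n_cases[OF A, of i1 g1]) auto
  obtain j2 where j2: "A j2 i2 \<noteq> None" "mact (Ghat_n G n) A x2 = Some (the (A j2 i2) \<otimes> g2, j2)"
    using nz eq x by (cases rule: mact_Ghat_n_cases[OF A, of i2 g2]) auto
  have "j2 = j1" using eq j1 j2 by simp
  then have "i1 = i2" using In_mat_row_unique[OF A] j1(1) j2(1) by blast
  then show "orbit G (Ghat_n G n) x1 = orbit G (Ghat_n G n) x2" using x orbit_Ghat_n by simp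
qed simp_all

lemma rep_obj_Ghat_n:
  assumes "finite (carrier G)"
  shows "rep_obj G n (Ghat_n G n)"
  unfolding rep_obj_def
proof (intro conjI allI impI ballI)
  fix A B x assume A: "In_mat G n A" and B: "In_mat G n B" and "x \<in> carr (Ghat_n G n)"
  then show "mact (Ghat_n G n) (mmul G n A B) x = mact (Ghat_n G n) A (mact (Ghat_n G n) B x)"
    unfolding carr_Ghat_n using mact_Ghat_n_mmul by auto
next
  fix x assume "x \<in> carr (Ghat_n G n)"
  then show "mact (Ghat_n G n) zero_mat x = zer (Ghat_n G n)"
    unfolding carr_Ghat_n by (auto intro: mact_Ghat_n_col_empty simp: zero_mat_def)
next
  fix g x assume g: "g \<in> carrier G" and x: "x \<in> carr (Ghat_n G n)"
  from x show "mact (Ghat_n G n) (scal_mat n g) x = gact (Ghat_n G n) g x"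
  proof (cases rule: carr_Ghat_n_cases)
    case (2 y i)
    then have "scal_mat n g i i \<noteq> None" by (simp add: scal_mat_def)
    from mact_Ghat_n_col_entry[OF In_mat_scal_mat[OF g] this] show ?thesis
      using 2 by (simp add: scal_mat_def)
  qed simp
qed (use assms vect_obj_Ghat_n vect_mor_mact_Ghat_n in blast)+

end

section \<open>Direct sums\<close>

lemma carr_dsum:
  "carr (dsum C F) = insert None {Some (c, v) | c v. c \<in> C \<and> v \<in> carr (F c) \<and> v \<noteq> zer (F c)}"
  unfolding dsum_def by simp

lemma carr_dsum_cases:
  assumes "x \<in> carr (dsum C F)"
  obtains "x = None" | c v where "x = Some (c, v)" "c \<in> C" "v \<in> carr (F c)" "v \<noteq> zer (F c)"
  using assms unfolding carr_dsum by blast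

lemma zer_dsum [simp]: "zer (dsum C F) = None"
  unfolding dsum_def by simp

lemma gact_dsum [simp]:
  "gact (dsum C F) g None = None"
  "gact (dsum C F) g (Some (c, v)) = (if gact (F c) g v = zer (F c) then None else Some (c, gact (F c) g v))"
  unfolding dsum_def by simp_all

lemma mact_dsum [simp]:
  "mact (dsum C F) A None = None"
  "mact (dsum C F) A (Some (c, v)) = (if mact (F c) A v = zer (F c) then None else Some (c, mact (F c) A v))"
  unfolding dsum_def by simp_all

abbreviation Ghat_n_sum :: "('g, 'b) monoid_scheme \<Rightarrow> nat \<Rightarrow> nat \<Rightarrow> ('g, (nat \<times> ('g \<times> nat) option) option) gobj"
  where "Ghat_n_sum G n k \<equiv> dsum {..<k} (\<lambda>_. Ghat_n G n)"

lemma carr_Ghat_n_sum_cases: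
  assumes "x \<in> carr (Ghat_n_sum G n k)"
  obtains "x = None" | c g i where "x = Some (c, Some (g, i))" "c < k" "g \<in> carrier G" "i < n"
  using assms unfolding carr_dsum carr_Ghat_n by auto

lemma Some_in_carr_Ghat_n_sum:
  "c < k \<Longrightarrow> g \<in> carrier G \<Longrightarrow> i < n \<Longrightarrow> Some (c, Some (g, i)) \<in> carr (Ghat_n_sum G n k)"
  unfolding carr_dsum carr_Ghat_n by simp

context group
begin

lemma orbit_dsum:
  assumes "vect_obj G (F c)" "v \<in> carr (F c)" "v \<noteq> zer (F c)"
  shows "orbit G (dsum C F) (Some (c, v)) = (\<lambda>w. Some (c, w)) ` orbit G (F c) v"
proof -
  have "gact (dsum C F) g (Some (c, v)) = Some (c, gact (F c) g v)" if "g \<in> carrier G" for g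
    using vect_obj_gact_nonzero[OF assms(1) that assms(2,3)] by simp
  then show ?thesis unfolding orbit_def image_image by (intro image_cong) auto
qed

lemma vect_obj_dsum:
  assumes C: "finite C" and F: "\<forall>c\<in>C. vect_obj G (F c)"
  shows "vect_obj G (dsum C F)"
  unfolding vect_obj_def
proof (intro conjI ballI impI)
  have "carr (dsum C F) \<subseteq> insert None (Some ` Sigma C (\<lambda>c. carr (F c)))"
    unfolding carr_dsum by auto
  moreover have "finite (Sigma C (\<lambda>c. carr (F c)))" using C F unfolding vect_obj_def by blast
  ultimately show "finite (carr (dsum C F))" by (simp add: finite_subset)
next
  fix g h x assume g: "g \<in> carrier G" and h: "h \<in> carrier G" and x: "x \<in> carr (dsum C F)"
  from x show "gact (dsum C F) (g \<otimes> h) x = gact (dsum C F) g (gact (dsum C F) h x)"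
    by (cases rule: carr_dsum_cases)
      (use F g h in \<open>auto simp: vect_obj_gact_mult vect_obj_gact_nonzero vect_obj_gact_closed\<close>)
next
  fix g x assume g: "g \<in> carrier G" and x: "x \<in> carr (dsum C F)"
  from x show "gact (dsum C F) g x \<in> carr (dsum C F)"
    by (cases rule: carr_dsum_cases)
      (use F g in \<open>auto simp: carr_dsum vect_obj_gact_nonzero vect_obj_gact_closed\<close>)
  assume nz: "x \<noteq> zer (dsum C F)" and fixed: "gact (dsum C F) g x = x"
  from x show "g = \<one>"
  proof (cases rule: carr_dsum_cases)
    case (2 c v)
    then show ?thesis using F g nz fixed vect_obj_gact_free[of "F c" g v] by (auto split: if_splits)
  qed (use nz in simp)
next
  fix x assume x: "x \<in> carr (dsum C F)"
  from x show "gact (dsum C F) \<one> x = x"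
    by (cases rule: carr_dsum_cases) (use F in \<open>auto simp: vect_obj_gact_one\<close>)
qed (simp_all add: carr_dsum)

lemma rep_obj_dsum:
  assumes C: "finite C" and F: "\<forall>c\<in>C. rep_obj G n (F c)"
  shows "rep_obj G n (dsum C F)"
  unfolding rep_obj_def
proof (intro conjI allI impI ballI)
  show "vect_obj G (dsum C F)" using vect_obj_dsum[OF C] F rep_obj_vect_obj by blast
next
  fix A assume A: "In_mat G n A"
  show "vect_mor G (dsum C F) (dsum C F) (mact (dsum C F) A)"
    unfolding vect_mor_def
  proof (intro conjI ballI impI)
    fix x assume "x \<in> carr (dsum C F)"
    then show "mact (dsum C F) A x \<in> carr (dsum C F)"
    proof (cases rule: carr_dsum_cases)
      case (2 c v)
      then show ?thesis using F A rep_obj_mact_closed[of n "F c" A v] by (auto simp: carr_dsum)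
    qed (simp add: carr_dsum)
  next
    fix g x assume g: "g \<in> carrier G" and x: "x \<in> carr (dsum C F)"
    from x show "mact (dsum C F) A (gact (dsum C F) g x) = gact (dsum C F) g (mact (dsum C F) A x)"
    proof (cases rule: carr_dsum_cases)
      case (2 c v)
      have V: "rep_obj G n (F c)" using F 2 by blast
      have "gact (F c) g (mact (F c) A v) = zer (F c) \<longleftrightarrow> mact (F c) A v = zer (F c)"
        using vect_obj_gact_nonzero[OF rep_obj_vect_obj[OF V] g rep_obj_mact_closed[OF V A]]
          vect_obj_gact_zer[OF rep_obj_vect_obj[OF V] g] 2 by metis
      then show ?thesis
        using 2 g vect_obj_gact_nonzero[OF rep_obj_vect_obj[OF V] g] rep_obj_mact_gact[OF V A g] by simp
    qed simp
  next
    fix x1 x2 assume x1: "x1 \<in> carr (dsum C F)" and x2: "x2 \<in> carr (dsum C F)"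
      and eq: "mact (dsum C F) A x1 = mact (dsum C F) A x2" and nz: "mact (dsum C F) A x1 \<noteq> zer (dsum C F)"
    from x1 nz obtain c v1 where x1': "x1 = Some (c, v1)" and c: "c \<in> C"
      and v1: "v1 \<in> carr (F c)" "v1 \<noteq> zer (F c)"
      by (cases rule: carr_dsum_cases) auto
    from x2 nz eq x1' obtain v2 where x2': "x2 = Some (c, v2)" and v2: "v2 \<in> carr (F c)" "v2 \<noteq> zer (F c)"
      by (cases rule: carr_dsum_cases) (auto split: if_splits)
    have eqc: "mact (F c) A v1 = mact (F c) A v2" and nzc: "mact (F c) A v1 \<noteq> zer (F c)"
      using eq nz x1' x2' by (auto split: if_splits)
    have V: "rep_obj G n (F c)" using F c by blast
    have "orbit G (F c) v1 = orbit G (F c) v2"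
      using rep_obj_mact_vect_mor[OF V A] v1 v2 eqc nzc unfolding vect_mor_def by blast
    then show "orbit G (dsum C F) x1 = orbit G (dsum C F) x2"
      using orbit_dsum[of F c, OF rep_obj_vect_obj[OF V]] v1 v2 x1' x2' by simp
  qed simp
next
  fix A B x assume A: "In_mat G n A" and B: "In_mat G n B" and x: "x \<in> carr (dsum C F)"
  from x show "mact (dsum C F) (mmul G n A B) x = mact (dsum C F) A (mact (dsum C F) B x)"
    by (cases rule: carr_dsum_cases)
      (use F A B in \<open>auto simp: rep_obj_mact_mmul rep_obj_mact_zer rep_obj_mact_closed\<close>)
next
  fix x assume "x \<in> carr (dsum C F)"
  then show "mact (dsum C F) zero_mat x = zer (dsum C F)"
    by (cases rule: carr_dsum_cases) (use F in \<open>auto simp: rep_obj_mact_zero_mat\<close>)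
next
  fix g x assume g: "g \<in> carrier G" and x: "x \<in> carr (dsum C F)"
  from x show "mact (dsum C F) (scal_mat n g) x = gact (dsum C F) g x"
    by (cases rule: carr_dsum_cases) (use F g in \<open>auto simp: rep_obj_mact_scal_mat\<close>)
qed

end

lemma (in comm_group) rep_obj_Ghat_n_sum:
  "finite (carrier G) \<Longrightarrow> rep_obj G n (Ghat_n_sum G n k)"
  by (intro rep_obj_dsum) (simp_all add: rep_obj_Ghat_n)

section \<open>Support on the diagonal matrix units\<close>

definition diag_supported :: "('g, 'b) monoid_scheme \<Rightarrow> nat \<Rightarrow> ('g, 'v, 'z) gobj_scheme \<Rightarrow> bool" where
  "diag_supported G n V \<longleftrightarrow> (\<forall>x\<in>carr V. x \<noteq> zer V \<longrightarrow> (\<exists>i<n. mact V (mat_unit G i i) x = x))"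

lemma diag_supported_dsum:
  assumes "\<forall>c\<in>C. diag_supported G n (F c)"
  shows "diag_supported G n (dsum C F)"
  unfolding diag_supported_def
proof (intro ballI impI)
  fix x assume x: "x \<in> carr (dsum C F)" and nz: "x \<noteq> zer (dsum C F)"
  from x nz obtain c v where "x = Some (c, v)" "c \<in> C" "v \<in> carr (F c)" "v \<noteq> zer (F c)"
    by (cases rule: carr_dsum_cases) auto
  with assms show "\<exists>i<n. mact (dsum C F) (mat_unit G i i) x = x"
    unfolding diag_supported_def by fastforce
qed

context monoid
begin

lemma diag_supported_Ghat_n: "diag_supported G n (Ghat_n G n)"
  unfolding diag_supported_def
proof (intro ballI impI)
  fix x assume "x \<in> carr (Ghat_n G n)" "x \<noteq> zer (Ghat_n G n)"
  then obtain g i where x: "x = Some (g, i)" "g \<in> carrier G" "i < n"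
    by (cases rule: carr_Ghat_n_cases) auto
  have "mat_unit G i i i i \<noteq> None" by (simp add: mat_unit_def)
  from mact_Ghat_n_col_entry[OF In_mat_mat_unit[OF x(3) x(3)] this, of g]
  show "\<exists>i<n. mact (Ghat_n G n) (mat_unit G i i) x = x"
    using x by (auto simp: mat_unit_def)
qed

lemma diag_supported_Ghat_n_sum: "diag_supported G n (Ghat_n_sum G n k)"
  by (intro diag_supported_dsum) (simp add: diag_supported_Ghat_n)

lemma diag_supported_rep_iso:
  assumes iso: "rep_iso G n V W" and W: "diag_supported G n W"
  shows "diag_supported G n V"
  unfolding diag_supported_def
proof (intro ballI impI)
  fix x assume x: "x \<in> carr V" "x \<noteq> zer V"
  from iso obtain f h where f: "rep_mor G n V W f" and h: "rep_mor G n W V h"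
    and hf: "\<forall>v\<in>carr V. h (f v) = v"
    unfolding rep_iso_def by blast
  have fx: "f x \<in> carr W" using f x unfolding rep_mor_def vect_mor_def by blast
  have "h (zer W) = zer V" using h unfolding rep_mor_def vect_mor_def by blast
  then have "f x \<noteq> zer W" using hf x by metis
  then obtain i where i: "i < n" "mact W (mat_unit G i i) (f x) = f x"
    using W fx unfolding diag_supported_def by blast
  have "h (mact W (mat_unit G i i) (f x)) = mact V (mat_unit G i i) (h (f x))"
    using h fx In_mat_mat_unit[OF i(1) i(1)] unfolding rep_mor_def by blast
  then show "\<exists>i<n. mact V (mat_unit G i i) x = x" using i hf x by auto
qed

lemma le_In_iff_columns:
  assumes A: "In_mat G n A" and B: "In_mat G n B"
  shows "le_In G n A B \<longleftrightarrow> (\<forall>l. (\<exists>j. A j l \<noteq> None) \<longrightarrow> (\<forall>p. B p l = A p l))"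
proof
  assume le: "le_In G n A B"
  show "\<forall>l. (\<exists>j. A j l \<noteq> None) \<longrightarrow> (\<forall>p. B p l = A p l)"
  proof (intro allI impI, elim exE)
    fix l j p assume Ajl: "A j l \<noteq> None"
    have l: "l < n" and a: "the (A j l) \<in> carrier G" using In_mat_entry[OF A Ajl] by auto
    have "mact (Ghat_n G n) A (Some (\<one>, l)) = Some (the (A j l), j)"
      using mact_Ghat_n_col_entry[OF A Ajl] a by simp
    with le l have mB: "mact (Ghat_n G n) B (Some (\<one>, l)) = Some (the (A j l), j)"
      unfolding le_In_def le_End_def carr_Ghat_n by auto
    then obtain j' where Bj'l: "B j' l \<noteq> None" "the (B j' l) \<in> carrier G"
      "mact (Ghat_n G n) B (Some (\<one>, l)) = Some (the (B j' l) \<otimes> \<one>, j')"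
      by (cases rule: mact_Ghat_n_cases[OF B, of l \<one>]) auto
    have eq: "Some (the (B j' l) \<otimes> \<one>, j') = Some (the (A j l), j)" using Bj'l(3) mB by (rule trans[OF sym])
    then have "j' = j" by simp
    from eq have "the (B j' l) = the (A j l)" using Bj'l(2) by (metis prod.inject option.inject r_one)
    with \<open>j' = j\<close> have "B j l = A j l" using Bj'l(1) Ajl by (metis option.expand)
    moreover have "A p l = None" "B p l = None" if "p \<noteq> j"
      using In_mat_col_unique[OF A Ajl, of p] In_mat_col_unique[OF B Bj'l(1), of p] \<open>j' = j\<close> that
      by blast+
    ultimately show "B p l = A p l" by (cases "p = j") simp_all
  qed
next
  assume cols: "\<forall>l. (\<exists>j. A j l \<noteq> None) \<longrightarrow> (\<forall>p. B p l = A p l)"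
  show "le_In G n A B"
    unfolding le_In_def le_End_def
  proof (intro ballI impI)
    fix x assume "x \<in> carr (Ghat_n G n)" and nz: "mact (Ghat_n G n) A x \<noteq> zer (Ghat_n G n)"
    then obtain g l where x: "x = Some (g, l)" by (cases rule: carr_Ghat_n_cases) auto
    have "\<exists>j. A j l \<noteq> None"
    proof (rule ccontr)
      assume "\<not> (\<exists>j. A j l \<noteq> None)"
      then have "\<forall>j. A j l = None" by simp
      then show False using nz x by (simp add: mact_Ghat_n_col_empty)
    qed
    with cols have "\<forall>p. B p l = A p l" by blast
    then show "mact (Ghat_n G n) B x = mact (Ghat_n G n) A x"
      unfolding x by (rule mact_Ghat_n_col_cong)
  qed
qed

lemma is_join_In_col:
  assumes "is_join_In G n S J" "S \<subseteq> {A. In_mat G n A}" "A \<in> S" "A j l \<noteq> None"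
  shows "J p l = A p l"
proof -
  have "In_mat G n A" using assms(2,3) by blast
  moreover have "In_mat G n J" "le_In G n A J" using assms(1,3) unfolding is_join_In_def by blast+
  ultimately show ?thesis using le_In_iff_columns assms(4) by blast
qed

lemma is_join_In_col_witness:
  assumes join: "is_join_In G n S J" and S: "S \<subseteq> {A. In_mat G n A}" and Jjl: "J j l \<noteq> None"
  shows "\<exists>A\<in>S. \<exists>j. A j l \<noteq> None"
proof (rule ccontr)
  assume none: "\<not> (\<exists>A\<in>S. \<exists>j. A j l \<noteq> None)"
  have J: "In_mat G n J" using join unfolding is_join_In_def by blast
  define J' where "J' = (\<lambda>p q. if q = l then None else J p q)"
  have J': "In_mat G n J'" using J unfolding In_mat_def J'_def by (auto split: if_splits)
  have "le_In G n A J'" if "A \<in> S" for A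
  proof -
    have "le_In G n A J" using join that unfolding is_join_In_def by blast
    then show ?thesis
      using that S none J J' le_In_iff_columns unfolding J'_def by (auto simp: subset_iff)
  qed
  then have "le_In G n J J'" using join J' unfolding is_join_In_def by blast
  then have "J' j l = J j l" using J J' Jjl le_In_iff_columns by blast
  then show False using Jjl by (simp add: J'_def)
qed

lemma is_join_In_mat_units_diag:
  "is_join_In G n ((\<lambda>i. mat_unit G i i) ` {..<n}) (scal_mat n \<one>)"
  unfolding is_join_In_def
proof (intro conjI ballI allI impI)
  show one: "In_mat G n (scal_mat n \<one>)" by (simp add: In_mat_scal_mat)
  fix A assume "A \<in> (\<lambda>i. mat_unit G i i) ` {..<n}"
  then obtain i where i: "i < n" "A = mat_unit G i i" by blast
  show "le_In G n A (scal_mat n \<one>)"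
    unfolding i(2) le_In_iff_columns[OF In_mat_mat_unit[OF i(1) i(1)] one]
    using i(1) by (auto simp: mat_unit_def scal_mat_def)
next
  fix B assume B: "In_mat G n B" and ub: "\<forall>A\<in>(\<lambda>i. mat_unit G i i) ` {..<n}. le_In G n A B"
  show "le_In G n (scal_mat n \<one>) B"
    unfolding le_In_iff_columns[OF In_mat_scal_mat[OF one_closed] B]
  proof (intro allI impI)
    fix l p assume "\<exists>j. scal_mat n \<one> j l \<noteq> None"
    then have l: "l < n" by (auto simp: scal_mat_def split: if_splits)
    have "le_In G n (mat_unit G l l) B" using ub l by blast
    then have "B p l = mat_unit G l l p l"
      using le_In_iff_columns[OF In_mat_mat_unit[OF l l] B] by (auto simp: mat_unit_def)
    then show "B p l = scal_mat n \<one> p l" using l by (simp add: mat_unit_def scal_mat_def)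
  qed
qed

end

context group
begin

lemma mact_col_cong:
  assumes V: "rep_obj G n V" and X: "In_mat G n X" and Y: "In_mat G n Y" and l: "l < n"
    and x: "x \<in> carr V" and fixed: "mact V (mat_unit G l l) x = x" and cols: "\<forall>p. X p l = Y p l"
  shows "mact V X x = mact V Y x"
proof -
  have "mact V X x = mact V (mmul G n X (mat_unit G l l)) x"
    using rep_obj_mact_mmul[OF V X In_mat_mat_unit[OF l l] x] fixed by simp
  also have "mmul G n X (mat_unit G l l) = mmul G n Y (mat_unit G l l)"
    using mmul_mat_unit_right[OF X l] mmul_mat_unit_right[OF Y l] cols by (simp add: fun_eq_iff)
  also have "mact V (mmul G n Y (mat_unit G l l)) x = mact V Y x"
    using rep_obj_mact_mmul[OF V Y In_mat_mat_unit[OF l l] x] fixed by simp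
  finally show ?thesis .
qed

lemma mact_col_empty:
  assumes V: "rep_obj G n V" and X: "In_mat G n X" and l: "l < n"
    and x: "x \<in> carr V" and fixed: "mact V (mat_unit G l l) x = x" and empty: "\<forall>p. X p l = None"
  shows "mact V X x = zer V"
  using mact_col_cong[OF V X In_mat_zero_mat l x fixed] empty rep_obj_mact_zero_mat[OF V x]
  by (simp add: zero_mat_def)

lemma rep_M_join:
  "rep_M G n V \<Longrightarrow> S \<subseteq> {A. In_mat G n A} \<Longrightarrow> is_join_In G n S J \<Longrightarrow>
    is_join_End G V (mact V ` S) (mact V J)"
  unfolding rep_M_def by blast

lemma vect_mor_restrict:
  assumes V: "vect_obj G V" and inv: "\<forall>g\<in>carrier G. \<forall>x\<in>carr V. P (gact V g x) \<longleftrightarrow> P x"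
  shows "vect_mor G V V (\<lambda>x. if P x then x else zer V)"
  unfolding vect_mor_def
  using vect_obj_zer_in[OF V] vect_obj_gact_zer[OF V] inv by (auto split: if_splits)

lemma rep_M_join_mat_units_diag:
  assumes "rep_M G n V"
  shows "is_join_End G V (mact V ` (\<lambda>i. mat_unit G i i) ` {..<n}) (mact V (scal_mat n \<one>))"
proof -
  have "(\<lambda>i. mat_unit G i i) ` {..<n} \<subseteq> {A. In_mat G n A}" by (auto simp: In_mat_mat_unit)
  then show ?thesis using rep_M_join[OF assms] is_join_In_mat_units_diag by blast
qed

lemma rep_M_mact_mat_unit_diag:
  assumes M: "rep_M G n V" and i: "i < n" and x: "x \<in> carr V" and nz: "mact V (mat_unit G i i) x \<noteq> zer V"
  shows "mact V (mat_unit G i i) x = x"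
proof -
  have "le_End V (mact V (mat_unit G i i)) (mact V (scal_mat n \<one>))"
    using rep_M_join_mat_units_diag[OF M] i unfolding is_join_End_def by blast
  then have "mact V (scal_mat n \<one>) x = mact V (mat_unit G i i) x"
    using x nz unfolding le_End_def by blast
  moreover have "rep_obj G n V" using M unfolding rep_M_def by blast
  ultimately show ?thesis using rep_obj_mact_one[OF _ x] by simp
qed

lemma vect_mor_diag_support_proj:
  assumes V: "rep_obj G n V"
  shows "vect_mor G V V (\<lambda>x. if \<exists>i<n. mact V (mat_unit G i i) x \<noteq> zer V then x else zer V)"
proof (rule vect_mor_restrict[OF rep_obj_vect_obj[OF V]], intro ballI)
  fix g x assume g: "g \<in> carrier G" and x: "x \<in> carr V"
  have "mact V (mat_unit G i i) (gact V g x) \<noteq> zer V \<longleftrightarrow> mact V (mat_unit G i i) x \<noteq> zer V"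
    if i: "i < n" for i
    using rep_obj_mact_gact[OF V In_mat_mat_unit[OF i i] g x]
      vect_obj_gact_nonzero[OF rep_obj_vect_obj[OF V] g rep_obj_mact_closed[OF V In_mat_mat_unit[OF i i] x]]
      vect_obj_gact_zer[OF rep_obj_vect_obj[OF V] g] by metis
  then show "(\<exists>i<n. mact V (mat_unit G i i) (gact V g x) \<noteq> zer V) \<longleftrightarrow> (\<exists>i<n. mact V (mat_unit G i i) x \<noteq> zer V)"
    by blast
qed

lemma rep_M_imp_diag_supported:
  assumes M: "rep_M G n V"
  shows "diag_supported G n V"
proof -
  have V: "rep_obj G n V" using M unfolding rep_M_def by blast
  define P where "P x \<longleftrightarrow> (\<exists>i<n. mact V (mat_unit G i i) x \<noteq> zer V)" for x
  define proj where "proj x = (if P x then x else zer V)" for x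
  have "vect_mor G V V proj" using vect_mor_diag_support_proj[OF V] unfolding proj_def P_def .
  moreover have "le_End V (mact V (mat_unit G i i)) proj" if i: "i < n" for i
    unfolding le_End_def
  proof (intro ballI impI)
    fix x assume x: "x \<in> carr V" and nz: "mact V (mat_unit G i i) x \<noteq> zer V"
    then have "P x" using i unfolding P_def by blast
    then show "proj x = mact V (mat_unit G i i) x"
      using rep_M_mact_mat_unit_diag[OF M i x nz] by (simp add: proj_def)
  qed
  ultimately have "le_End V (mact V (scal_mat n \<one>)) proj"
    using rep_M_join_mat_units_diag[OF M] unfolding is_join_End_def by blast
  then have "P x" if x: "x \<in> carr V" and nz: "x \<noteq> zer V" for x
    using x nz rep_obj_mact_one[OF V x] unfolding le_End_def proj_def by (auto split: if_splits)
  then show ?thesis unfolding diag_supported_def P_def using rep_M_mact_mat_unit_diag[OF M] by blast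
qed

lemma diag_supported_imp_rep_M:
  assumes V: "rep_obj G n V" and D: "diag_supported G n V"
  shows "rep_M G n V"
  unfolding rep_M_def
proof (intro conjI allI impI V)
  fix S J assume S: "S \<subseteq> {A. In_mat G n A}" and join: "is_join_In G n S J"
  have J: "In_mat G n J" using join unfolding is_join_In_def by blast
  have diag: "\<exists>l<n. mact V (mat_unit G l l) x = x" if "x \<in> carr V" "mact V X x \<noteq> zer V" "In_mat G n X" for X x
    using D that rep_obj_mact_zer[OF V that(3)] unfolding diag_supported_def by metis
  have col: "\<exists>j. X j l \<noteq> None"
    if "In_mat G n X" "l < n" "x \<in> carr V" "mact V (mat_unit G l l) x = x" "mact V X x \<noteq> zer V" for X l x
    using mact_col_empty[OF V that(1-4)] that(5) by blast
  have agree: "mact V J x = mact V A x"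
    if "A \<in> S" "l < n" "x \<in> carr V" "mact V (mat_unit G l l) x = x" "A j l \<noteq> None" for A l x j
    using mact_col_cong[OF V J _ that(2-4)] is_join_In_col[OF join S that(1,5)] S that(1) by blast
  show "is_join_End G V (mact V ` S) (mact V J)"
    unfolding is_join_End_def
  proof (intro conjI ballI allI impI)
    show "vect_mor G V V (mact V J)" by (rule rep_obj_mact_vect_mor[OF V J])
  next
    fix A' assume "A' \<in> mact V ` S"
    then obtain A where A: "A \<in> S" "A' = mact V A" by blast
    then have AI: "In_mat G n A" using S by blast
    show "le_End V A' (mact V J)"
      unfolding le_End_def A(2)
      using diag[OF _ _ AI] col[OF AI] agree[OF A(1)] by metis
  next
    fix B assume "vect_mor G V V B" and ub: "\<forall>A'\<in>mact V ` S. le_End V A' B"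
    show "le_End V (mact V J) B"
      unfolding le_End_def
    proof (intro ballI impI)
      fix x assume x: "x \<in> carr V" and nz: "mact V J x \<noteq> zer V"
      obtain l where l: "l < n" "mact V (mat_unit G l l) x = x" using diag[OF x nz J] by blast
      obtain j where "J j l \<noteq> None" using col[OF J l(1) x l(2) nz] by blast
      then obtain A j' where A: "A \<in> S" "A j' l \<noteq> None" using is_join_In_col_witness[OF join S] by blast
      then have "mact V J x = mact V A x" using agree l x by blast
      moreover have "le_End V (mact V A) B" using ub A(1) by blast
      ultimately show "B x = mact V J x" using x nz unfolding le_End_def by metis
    qed
  qed
qed

lemma rep_M_iff_diag_supported: "rep_obj G n V \<Longrightarrow> rep_M G n V \<longleftrightarrow> diag_supported G n V"
  using rep_M_imp_diag_supported diag_supported_imp_rep_M by blast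

end

section \<open>Decomposition into copies of the simple object\<close>

lemma vect_morI_inj_on:
  assumes "\<forall>v\<in>carr V. f v \<in> carr W" and "f (zer V) = zer W"
    and "\<forall>g\<in>carrier G. \<forall>v\<in>carr V. f (gact V g v) = gact W g (f v)"
    and "inj_on f (carr V)"
  shows "vect_mor G V W f"
  using assms unfolding vect_mor_def inj_on_def by blast

context group
begin

lemma orbit_eq_of_mem:
  assumes "vect_obj G V" "x \<in> carr V" "y \<in> orbit G V x"
  shows "orbit G V y = orbit G V x"
proof -
  obtain g where "g \<in> carrier G" "y = gact V g x" using assms(3) unfolding orbit_def by blast
  then show ?thesis using orbit_gact[OF assms(1,2)] by simp
qed

lemma bij_rep_mor_imp_rep_iso:
  assumes D: "rep_obj G n D" and h: "rep_mor G n D V h" and bij: "bij_betw h (carr D) (carr V)"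
  shows "rep_iso G n V D"
proof -
  define f where "f = inv_into (carr D) h"
  have f_in: "f v \<in> carr D" if "v \<in> carr V" for v
    using that bij unfolding f_def bij_betw_def by (metis inv_into_into)
  have hf: "h (f v) = v" if "v \<in> carr V" for v
    using that bij unfolding f_def bij_betw_def by (metis f_inv_into_f)
  have fh: "f (h w) = w" if "w \<in> carr D" for w
    using that bij unfolding f_def bij_betw_def by (metis inv_into_f_f)
  have h_zer: "h (zer D) = zer V"
    and h_gact: "\<And>g w. g \<in> carrier G \<Longrightarrow> w \<in> carr D \<Longrightarrow> h (gact D g w) = gact V g (h w)"
    and h_mact: "\<And>A w. In_mat G n A \<Longrightarrow> w \<in> carr D \<Longrightarrow> h (mact D A w) = mact V A (h w)"
    using h unfolding rep_mor_def vect_mor_def by blast+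
  have vo: "vect_obj G D" by (rule rep_obj_vect_obj[OF D])
  have f_gact: "f (gact V g v) = gact D g (f v)" if g: "g \<in> carrier G" and v: "v \<in> carr V" for g v
  proof -
    have "h (gact D g (f v)) = gact V g v" using h_gact[OF g f_in[OF v]] hf[OF v] by simp
    then show ?thesis using fh[OF vect_obj_gact_closed[OF vo g f_in[OF v]]] by simp
  qed
  have f_mact: "f (mact V A v) = mact D A (f v)" if A: "In_mat G n A" and v: "v \<in> carr V" for A v
  proof -
    have "h (mact D A (f v)) = mact V A v" using h_mact[OF A f_in[OF v]] hf[OF v] by simp
    then show ?thesis using fh[OF rep_obj_mact_closed[OF D A f_in[OF v]]] by simp
  qed
  have "vect_mor G V D f"
  proof (rule vect_morI_inj_on)
    show "f (zer V) = zer D" using fh[OF vect_obj_zer_in[OF vo]] h_zer by simp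
    show "inj_on f (carr V)" using hf by (metis inj_onI)
  qed (use f_in f_gact in blast)+
  with f_mact have "rep_mor G n V D f" unfolding rep_mor_def by blast
  then show ?thesis unfolding rep_iso_def using h hf fh by blast
qed

end

locale orbit_transversal = comm_group G for G :: "('g, 'b) monoid_scheme" (structure) +
  fixes n :: nat and V :: "('g, 'v, 'z) gobj_scheme" and k :: nat and r :: "nat \<Rightarrow> 'v"
  assumes rep: "rep_obj G n V" and n_pos: "0 < n"
    and r_in: "c < k \<Longrightarrow> r c \<in> carr V"
    and r_nonzero: "c < k \<Longrightarrow> r c \<noteq> zer V"
    and r_fixed: "c < k \<Longrightarrow> mact V (mat_unit G 0 0) (r c) = r c"
    and r_distinct: "c < k \<Longrightarrow> c' < k \<Longrightarrow> r c' \<in> orbit G V (r c) \<Longrightarrow> c' = c"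
    and r_covers: "y \<in> carr V \<Longrightarrow> y \<noteq> zer V \<Longrightarrow> mact V (mat_unit G 0 0) y = y \<Longrightarrow>
      \<exists>c<k. y \<in> orbit G V (r c)"
begin

definition basis_map :: "(nat \<times> ('g \<times> nat) option) option \<Rightarrow> 'v" where
  "basis_map x = (case x of Some (c, Some (g, i)) \<Rightarrow> gact V g (mact V (mat_unit G i 0) (r c)) | _ \<Rightarrow> zer V)"

lemma basis_map_simps [simp]:
  "basis_map None = zer V"
  "basis_map (Some (c, Some (g, i))) = gact V g (mact V (mat_unit G i 0) (r c))"
  unfolding basis_map_def by simp_all

lemma vect_obj_V: "vect_obj G V"
  by (rule rep_obj_vect_obj[OF rep])

lemma mact_unit_r_in: "c < k \<Longrightarrow> i < n \<Longrightarrow> mact V (mat_unit G i 0) (r c) \<in> carr V"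
  using rep_obj_mact_closed[OF rep In_mat_mat_unit[OF _ n_pos] r_in] by blast

lemma basis_map_in: "c < k \<Longrightarrow> g \<in> carrier G \<Longrightarrow> i < n \<Longrightarrow> basis_map (Some (c, Some (g, i))) \<in> carr V"
  using vect_obj_gact_closed[OF vect_obj_V _ mact_unit_r_in] by simp

lemma mact_unit_basis_map:
  assumes c: "c < k" and g: "g \<in> carrier G" and i: "i < n" and l: "l < n" and m: "m < n"
  shows "mact V (mat_unit G m l) (basis_map (Some (c, Some (g, i)))) =
    (if l = i then gact V g (mact V (mat_unit G m 0) (r c)) else zer V)"
  using rep_obj_mact_gact[OF rep In_mat_mat_unit[OF m l] g mact_unit_r_in[OF c i]]
    rep_obj_mact_mat_unit_mat_unit[OF rep m l i n_pos r_in[OF c]] vect_obj_gact_zer[OF vect_obj_V g]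
  by simp

lemma mact_unit_basis_map_back:
  "c < k \<Longrightarrow> g \<in> carrier G \<Longrightarrow> i < n \<Longrightarrow>
    mact V (mat_unit G 0 i) (basis_map (Some (c, Some (g, i)))) = gact V g (r c)"
  using mact_unit_basis_map[of c g i i 0] n_pos r_fixed by simp

lemma gact_r_inj:
  assumes c: "c1 < k" "c2 < k" and g: "g1 \<in> carrier G" "g2 \<in> carrier G"
    and eq: "gact V g1 (r c1) = gact V g2 (r c2)"
  shows "c1 = c2 \<and> g1 = g2"
proof -
  have "orbit G V (r c1) = orbit G V (r c2)"
    using orbit_gact[OF vect_obj_V r_in[OF c(1)] g(1)] orbit_gact[OF vect_obj_V r_in[OF c(2)] g(2)] eq by simp
  then have "c1 = c2" using r_distinct[OF c(2) c(1)] orbit_self[OF vect_obj_V r_in[OF c(1)]] by blast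
  with eq show ?thesis using vect_obj_gact_cancel[OF vect_obj_V g r_in[OF c(1)] r_nonzero[OF c(1)]] by simp
qed

lemma basis_map_nonzero:
  assumes "c < k" "g \<in> carrier G" "i < n"
  shows "basis_map (Some (c, Some (g, i))) \<noteq> zer V"
proof
  assume "basis_map (Some (c, Some (g, i))) = zer V"
  then have "gact V g (r c) = zer V"
    using mact_unit_basis_map_back[OF assms] rep_obj_mact_zer[OF rep In_mat_mat_unit[OF n_pos assms(3)]] by simp
  then show False using vect_obj_gact_nonzero[OF vect_obj_V assms(2) r_in r_nonzero] assms(1) by blast
qed

lemma basis_map_eq_zer_iff:
  "x \<in> carr (Ghat_n_sum G n k) \<Longrightarrow> basis_map x = zer V \<longleftrightarrow> x = None"
  by (auto elim!: carr_Ghat_n_sum_cases dest: basis_map_nonzero)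

lemma inj_on_basis_map: "inj_on basis_map (carr (Ghat_n_sum G n k))"
proof (rule inj_onI)
  fix x1 x2 assume x1: "x1 \<in> carr (Ghat_n_sum G n k)" and x2: "x2 \<in> carr (Ghat_n_sum G n k)"
    and eq: "basis_map x1 = basis_map x2"
  show "x1 = x2"
  proof (cases "x1 = None \<or> x2 = None")
    case True
    with x1 x2 eq show ?thesis using basis_map_eq_zer_iff by metis
  next
    case False
    with x1 x2 obtain c1 g1 i1 c2 g2 i2
      where x: "x1 = Some (c1, Some (g1, i1))" "x2 = Some (c2, Some (g2, i2))"
        and c: "c1 < k" "c2 < k" and g: "g1 \<in> carrier G" "g2 \<in> carrier G" and i: "i1 < n" "i2 < n"
      by (auto elim!: carr_Ghat_n_sum_cases)
    have "i1 = i2"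
      using mact_unit_basis_map[OF c(1) g(1) i(1) i(1) i(1)] mact_unit_basis_map[OF c(2) g(2) i(2) i(1) i(1)]
        eq x basis_map_nonzero[OF c(1) g(1) i(1)] by (auto split: if_splits)
    then have "gact V g1 (r c1) = gact V g2 (r c2)"
      using mact_unit_basis_map_back[OF c(1) g(1) i(1)] mact_unit_basis_map_back[OF c(2) g(2) i(2)] eq x by simp
    then show ?thesis using gact_r_inj[OF c g] x \<open>i1 = i2\<close> by simp
  qed
qed

lemma basis_map_reaches:
  assumes y: "y \<in> carr V" "y \<noteq> zer V" and i: "i < n" "mact V (mat_unit G i i) y = y"
  obtains c g where "c < k" "g \<in> carrier G" "basis_map (Some (c, Some (g, i))) = y"
proof -
  define z where "z = mact V (mat_unit G 0 i) y"
  have z: "z \<in> carr V" unfolding z_def using rep_obj_mact_closed[OF rep In_mat_mat_unit[OF n_pos i(1)] y(1)] .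
  have "mact V (mat_unit G 0 0) z = z"
    unfolding z_def using rep_obj_mact_mat_unit_mat_unit[OF rep n_pos n_pos n_pos i(1) y(1)] by simp
  moreover have zy: "mact V (mat_unit G i 0) z = y"
    unfolding z_def using rep_obj_mact_mat_unit_mat_unit[OF rep i(1) n_pos n_pos i(1) y(1)] i(2) by simp
  moreover have "z \<noteq> zer V" using zy y(2) rep_obj_mact_zer[OF rep In_mat_mat_unit[OF i(1) n_pos]] by auto
  ultimately obtain c where c: "c < k" "z \<in> orbit G V (r c)" using r_covers z by blast
  then obtain g where g: "g \<in> carrier G" "z = gact V g (r c)" unfolding orbit_def by blast
  have "basis_map (Some (c, Some (g, i))) = y"
    using rep_obj_mact_gact[OF rep In_mat_mat_unit[OF i(1) n_pos] g(1) r_in[OF c(1)]] zy g(2) by simp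
  with c(1) g(1) show thesis by (rule that)
qed

lemma basis_map_surj:
  assumes D: "diag_supported G n V"
  shows "basis_map ` carr (Ghat_n_sum G n k) = carr V"
proof
  show "basis_map ` carr (Ghat_n_sum G n k) \<subseteq> carr V"
    using basis_map_in vect_obj_zer_in[OF vect_obj_V] by (auto elim!: carr_Ghat_n_sum_cases)
next
  show "carr V \<subseteq> basis_map ` carr (Ghat_n_sum G n k)"
  proof
    fix y assume y: "y \<in> carr V"
    show "y \<in> basis_map ` carr (Ghat_n_sum G n k)"
    proof (cases "y = zer V")
      case True
      then show ?thesis by (force simp: carr_dsum)
    next
      case False
      then obtain i where "i < n" "mact V (mat_unit G i i) y = y"
        using D y unfolding diag_supported_def by blast
      then obtain c g where "c < k" "g \<in> carrier G" "basis_map (Some (c, Some (g, i))) = y"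
        using basis_map_reaches y False by metis
      then show ?thesis using Some_in_carr_Ghat_n_sum \<open>i < n\<close> by (metis image_eqI)
    qed
  qed
qed

lemma mact_basis_map:
  assumes A: "In_mat G n A" and c: "c < k" and g: "g \<in> carrier G" and i: "i < n"
  shows "mact V A (basis_map (Some (c, Some (g, i)))) =
    basis_map (mact (Ghat_n_sum G n k) A (Some (c, Some (g, i))))"
proof -
  have "mact V A (basis_map (Some (c, Some (g, i)))) = gact V g (mact V (mmul G n A (mat_unit G i 0)) (r c))"
    using rep_obj_mact_gact[OF rep A g mact_unit_r_in[OF c i]]
      rep_obj_mact_mmul[OF rep A In_mat_mat_unit[OF i n_pos] r_in[OF c]] by simp
  also have "\<dots> = basis_map (mact (Ghat_n_sum G n k) A (Some (c, Some (g, i))))"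
  proof (cases rule: mact_Ghat_n_cases[OF A, of i g])
    case (1 j)
    let ?a = "the (A j i)"
    have "mact V (mmul G n A (mat_unit G i 0)) (r c) = gact V ?a (mact V (mat_unit G j 0) (r c))"
      using mmul_mat_unit_col_entry[OF A 1(1) i]
        rep_obj_mact_mmul[OF rep In_mat_scal_mat[OF 1(3)] In_mat_mat_unit[OF 1(2) n_pos] r_in[OF c]]
        rep_obj_mact_scal_mat[OF rep 1(3) mact_unit_r_in[OF c 1(2)]] by simp
    then show ?thesis
      using 1(4) vect_obj_gact_mult[OF vect_obj_V g 1(3) mact_unit_r_in[OF c 1(2)]] m_comm[OF g 1(3)] by simp
  next
    case 2
    then show ?thesis
      using mmul_mat_unit_col_empty[OF A i] rep_obj_mact_zero_mat[OF rep r_in[OF c]]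
        vect_obj_gact_zer[OF vect_obj_V g] by simp
  qed
  finally show ?thesis .
qed

lemma rep_mor_basis_map: "rep_mor G n (Ghat_n_sum G n k) V basis_map"
  unfolding rep_mor_def
proof (intro conjI allI impI ballI)
  show "vect_mor G (Ghat_n_sum G n k) V basis_map"
  proof (rule vect_morI_inj_on)
    show "\<forall>x\<in>carr (Ghat_n_sum G n k). basis_map x \<in> carr V"
      using basis_map_in vect_obj_zer_in[OF vect_obj_V] by (auto elim!: carr_Ghat_n_sum_cases)
    show "\<forall>h\<in>carrier G. \<forall>x\<in>carr (Ghat_n_sum G n k). basis_map (gact (Ghat_n_sum G n k) h x) = gact V h (basis_map x)"
      using vect_obj_gact_zer[OF vect_obj_V] vect_obj_gact_mult[OF vect_obj_V _ _ mact_unit_r_in]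
      by (auto elim!: carr_Ghat_n_sum_cases)
  qed (simp_all add: inj_on_basis_map)
next
  fix A x assume A: "In_mat G n A" and "x \<in> carr (Ghat_n_sum G n k)"
  then show "basis_map (mact (Ghat_n_sum G n k) A x) = mact V A (basis_map x)"
    using mact_basis_map[OF A] rep_obj_mact_zer[OF rep A] by (auto elim!: carr_Ghat_n_sum_cases)
qed

end

context comm_group
begin

lemma orbit_transversal_exists:
  assumes V: "rep_obj G n V" and n: "0 < n"
  obtains k r where "orbit_transversal G n V k r"
proof -
  have vo: "vect_obj G V" by (rule rep_obj_vect_obj[OF V])
  define P where "P = {y \<in> carr V. y \<noteq> zer V \<and> mact V (mat_unit G 0 0) y = y}"
  have fin: "finite (orbit G V ` P)" using vo unfolding vect_obj_def P_def by simp
  obtain k :: nat and e where ke: "orbit G V ` P = e ` {i. i < k}" and e: "inj_on e {i. i < k}"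
    using finite_imp_nat_seg_image_inj_on[OF fin] by blast
  define r where "r c = (SOME y. y \<in> P \<and> orbit G V y = e c)" for c
  have r: "r c \<in> P \<and> orbit G V (r c) = e c" if "c < k" for c
  proof -
    have "e c \<in> orbit G V ` P" unfolding ke using that by blast
    then obtain y where "y \<in> P \<and> orbit G V y = e c" by blast
    then show ?thesis unfolding r_def by (rule someI)
  qed
  have "orbit_transversal_axioms G n V k r"
  proof
    fix c c' assume c: "c < k" and c': "c' < k" and mem: "r c' \<in> orbit G V (r c)"
    have "r c \<in> carr V" using r[OF c] unfolding P_def by blast
    then have "e c' = e c" using orbit_eq_of_mem[OF vo _ mem] r[OF c] r[OF c'] by simp
    then show "c' = c" using e c c' unfolding inj_on_def by blast
  next
    fix y assume "y \<in> carr V" "y \<noteq> zer V" "mact V (mat_unit G 0 0) y = y"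
    then have y: "y \<in> P" unfolding P_def by blast
    then obtain c where c: "c < k" "orbit G V y = e c" using ke by blast
    then have "y \<in> orbit G V (r c)" using r[OF c(1)] orbit_self[OF vo] y unfolding P_def by auto
    then show "\<exists>c<k. y \<in> orbit G V (r c)" using c(1) by blast
  qed (use V n r in \<open>simp_all add: P_def\<close>)
  then show thesis by (intro that orbit_transversal.intro comm_group_axioms)
qed

lemma diag_supported_imp_rep_iso:
  assumes fin: "finite (carrier G)" and V: "rep_obj G n V" and n: "0 < n" and D: "diag_supported G n V"
  shows "\<exists>k. rep_iso G n V (Ghat_n_sum G n k)"
proof -
  obtain k r where "orbit_transversal G n V k r" using orbit_transversal_exists[OF V n] .
  then interpret orbit_transversal G n V k r .
  have "rep_iso G n V (Ghat_n_sum G n k)"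
    using bij_rep_mor_imp_rep_iso[OF rep_obj_Ghat_n_sum[OF fin]] rep_mor_basis_map inj_on_basis_map basis_map_surj[OF D]
    unfolding bij_betw_def by blast
  then show ?thesis by blast
qed

end

theorem mainTheorem15:
  fixes G :: "('g, 'b) monoid_scheme" and n :: nat and V :: "('g, 'v) gobj"
  assumes "comm_group G" and "finite (carrier G)" and "0 < n"
    and "rep_obj G n V"
  shows "(\<forall>k::nat. rep_obj G n (dsum {..<k} (\<lambda>_. Ghat_n G n))) \<and>
         (rep_M G n V \<longleftrightarrow> (\<exists>k::nat. rep_iso G n V (dsum {..<k} (\<lambda>_. Ghat_n G n))))"
proof -
  interpret comm_group G by (rule assms(1))
  have "rep_M G n V \<longleftrightarrow> diag_supported G n V" by (rule rep_M_iff_diag_supported[OF assms(4)])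
  also have "\<dots> \<longleftrightarrow> (\<exists>k. rep_iso G n V (Ghat_n_sum G n k))"
  proof
    assume "diag_supported G n V"
    then show "\<exists>k. rep_iso G n V (Ghat_n_sum G n k)" by (rule diag_supported_imp_rep_iso[OF assms(2,4,3)])
  next
    assume "\<exists>k. rep_iso G n V (Ghat_n_sum G n k)"
    then show "diag_supported G n V" using diag_supported_rep_iso diag_supported_Ghat_n_sum by blast
  qed
  finally show ?thesis using rep_obj_Ghat_n_sum[OF assms(2)] by blast
qed

end
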